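(* Let $p,q,r\in\{1,\dots,M\}$ and suppose $(\phi_q,\phi_r)$ forms a $p$-resonance. (i) If $p\in\mathcal I\cup\mathcal O$ (i.e. $\underline\omega_p\in\mathbb R$), then $q,r\in\mathcal I\cup\mathcal O$. (ii) If $p\in\mathcal P\cup\mathcal N$ (i.e. $\underline\omega_p\notin\mathbb R$), then at least one of $q,r$ belongs to $\mathcal P\cup\mathcal N$.
   Context: $\underline\omega_1,\dots,\underline\omega_M\in\mathbb C$ are the distinct eigenvalues of $-A_d(0)^{-1}(\underline\tau I+\sum_{j=1}^{d-1}\underline\eta_jA_j(0))$ for real matrices $A_j(0)$ and a boundary frequency $\beta=(\underline\tau,\underline\eta)\in\mathbb R^d\setminus0$; phases $\phi_m(x)=\beta\cdot x'+\underline\omega_mx_d$. $\mathcal I\cup\mathcal O$ is the set of $m$ with $\underline\omega_m$ real, $\mathcal P=\{m:\mathrm{Im}\,\underline\omega_m>0\}$, $\mathcal N=\{m:\mathrm{Im}\,\underline\omega_m<0\}$. Let $Z_m=\{n\in\mathbb Z:n\,\mathrm{Im}\,\underline\omega_m\ge0\}$. The pair $(\phi_q,\phi_r)$ forms a $p$-resonance if $n_p\phi_p=n_q\phi_q+n_r\phi_r$ for some $(n_p,n_q,n_r)\in\mathbb Z\times Z_q\times Z_r$ with all entries nonzero. *)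

theory Defs
  imports "HOL-Analysis.Analysis"
begin

text \<open>The boundary frequency beta = (tau, eta_1, ..., eta_{d-1}) in R^d is
  represented as a function beta :: nat => real, with beta 0 = tau and beta j = eta_j
  for 1 <= j <= d-1. The real N x N matrices A_j(0), j = 1..d, are A j :: real^'n^'n.
  A point x = (x', x_d) is given by x' :: nat => real (only components 0..d-1 matter)
  and x_d :: real.\<close>

definition symbol_matrix :: "nat \<Rightarrow> (nat \<Rightarrow> real^'n^'n) \<Rightarrow> (nat \<Rightarrow> real) \<Rightarrow> real^'n^'n" where
  "symbol_matrix d A beta =
     - (matrix_inv (A d) ** (beta 0 *\<^sub>R mat 1 + (\<Sum>j\<in>{1..d-1}. beta j *\<^sub>R A j)))"

definition complexify :: "real^'n^'m \<Rightarrow> complex^'n^'m" where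
  "complexify B = (\<chi> i j. complex_of_real (B $ i $ j))"

definition is_eigenvalue :: "complex^'n^'n \<Rightarrow> complex \<Rightarrow> bool" where
  "is_eigenvalue B w \<longleftrightarrow> (\<exists>v. v \<noteq> 0 \<and> B *v v = w *s v)"

definition phase :: "nat \<Rightarrow> (nat \<Rightarrow> real) \<Rightarrow> (nat \<Rightarrow> complex) \<Rightarrow> nat \<Rightarrow> (nat \<Rightarrow> real) \<Rightarrow> real \<Rightarrow> complex" where
  "phase d beta \<omega> m x' xd = complex_of_real (\<Sum>j<d. beta j * x' j) + \<omega> m * complex_of_real xd"

definition Zset :: "(nat \<Rightarrow> complex) \<Rightarrow> nat \<Rightarrow> int set" where
  "Zset \<omega> m = {n. real_of_int n * Im (\<omega> m) \<ge> 0}"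

definition resonance :: "nat \<Rightarrow> (nat \<Rightarrow> real) \<Rightarrow> (nat \<Rightarrow> complex) \<Rightarrow> nat \<Rightarrow> nat \<Rightarrow> nat \<Rightarrow> bool" where
  "resonance d beta \<omega> p q r \<longleftrightarrow>
     (\<exists>np nq nr. nq \<in> Zset \<omega> q \<and> nr \<in> Zset \<omega> r \<and> np \<noteq> 0 \<and> nq \<noteq> 0 \<and> nr \<noteq> 0 \<and>
        (\<forall>x' xd. of_int np * phase d beta \<omega> p x' xd =
                  of_int nq * phase d beta \<omega> q x' xd + of_int nr * phase d beta \<omega> r x' xd))"

definition IO_set :: "nat \<Rightarrow> (nat \<Rightarrow> complex) \<Rightarrow> nat set" where
  "IO_set M \<omega> = {m \<in> {1..M}. \<omega> m \<in> \<real>}"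
definition P_set :: "nat \<Rightarrow> (nat \<Rightarrow> complex) \<Rightarrow> nat set" where
  "P_set M \<omega> = {m \<in> {1..M}. Im (\<omega> m) > 0}"
definition N_set :: "nat \<Rightarrow> (nat \<Rightarrow> complex) \<Rightarrow> nat set" where
  "N_set M \<omega> = {m \<in> {1..M}. Im (\<omega> m) < 0}"

end

theory Submission
  imports Defs
begin

text \<open>Evaluating a resonance at \<open>x' = 0\<close>, \<open>x\<^sub>d = 1\<close> gives
  \<open>n\<^sub>p \<omega>\<^sub>p = n\<^sub>q \<omega>\<^sub>q + n\<^sub>r \<omega>\<^sub>r\<close>; taking imaginary parts, the right-hand side
  is a sum of two nonnegative terms by the sign conditions \<open>n\<^sub>q \<in> Z\<^sub>q\<close>, \<open>n\<^sub>r \<in> Z\<^sub>r\<close>.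
  Hence \<open>Im \<omega>\<^sub>p = 0\<close> forces both terms, and so (as \<open>n\<^sub>q, n\<^sub>r \<noteq> 0\<close>) \<open>Im \<omega>\<^sub>q\<close> and
  \<open>Im \<omega>\<^sub>r\<close>, to vanish, while \<open>Im \<omega>\<^sub>p \<noteq> 0\<close> forces one of them to be nonzero.\<close>

lemma resonance_Im_relation:
  assumes "resonance d beta \<omega> p q r"
  obtains np nq nr :: int
  where "np \<noteq> 0" "nq \<noteq> 0" "nr \<noteq> 0"
    and "nq * Im (\<omega> q) \<ge> 0" "nr * Im (\<omega> r) \<ge> 0"
    and "np * Im (\<omega> p) = nq * Im (\<omega> q) + nr * Im (\<omega> r)"
proof -
  obtain np nq nr where Z: "nq \<in> Zset \<omega> q" "nr \<in> Zset \<omega> r"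
    and nonzero: "np \<noteq> 0" "nq \<noteq> 0" "nr \<noteq> 0"
    and phases: "\<forall>x' xd. of_int np * phase d beta \<omega> p x' xd =
                  of_int nq * phase d beta \<omega> q x' xd + of_int nr * phase d beta \<omega> r x' xd"
    using assms unfolding resonance_def by blast
  from phases[rule_format, of "\<lambda>_. 0" 1]
  have "of_int np * \<omega> p = of_int nq * \<omega> q + of_int nr * \<omega> r"
    by (simp add: phase_def)
  then have "Im (of_int np * \<omega> p) = Im (of_int nq * \<omega> q + of_int nr * \<omega> r)"
    by (rule arg_cong)
  then have "np * Im (\<omega> p) = nq * Im (\<omega> q) + nr * Im (\<omega> r)"
    by simp
  moreover have "nq * Im (\<omega> q) \<ge> 0" "nr * Im (\<omega> r) \<ge> 0"
    using Z unfolding Zset_def by auto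
  ultimately show thesis
    using nonzero that by blast
qed

lemma resonance_Im_zero:
  assumes "resonance d beta \<omega> p q r" and "Im (\<omega> p) = 0"
  shows "Im (\<omega> q) = 0 \<and> Im (\<omega> r) = 0"
proof -
  obtain np nq nr :: int where "nq \<noteq> 0" "nr \<noteq> 0"
    and "nq * Im (\<omega> q) \<ge> 0" "nr * Im (\<omega> r) \<ge> 0"
    and "np * Im (\<omega> p) = nq * Im (\<omega> q) + nr * Im (\<omega> r)"
    using resonance_Im_relation[OF assms(1)] by metis
  with assms(2) have "nq * Im (\<omega> q) + nr * Im (\<omega> r) = 0"
    by simp
  with \<open>nq * Im (\<omega> q) \<ge> 0\<close> \<open>nr * Im (\<omega> r) \<ge> 0\<close>
  have "nq * Im (\<omega> q) = 0" "nr * Im (\<omega> r) = 0"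
    by linarith+
  with \<open>nq \<noteq> 0\<close> \<open>nr \<noteq> 0\<close> show ?thesis
    by simp
qed

lemma resonance_Im_nonzero:
  assumes "resonance d beta \<omega> p q r" and "Im (\<omega> p) \<noteq> 0"
  shows "Im (\<omega> q) \<noteq> 0 \<or> Im (\<omega> r) \<noteq> 0"
proof -
  obtain np nq nr :: int where "np \<noteq> 0"
    and "np * Im (\<omega> p) = nq * Im (\<omega> q) + nr * Im (\<omega> r)"
    using resonance_Im_relation[OF assms(1)] by metis
  with assms(2) show ?thesis
    by auto
qed

theorem proposition2p13:
  fixes d M :: nat and A :: "nat \<Rightarrow> real^'n^'n" and beta :: "nat \<Rightarrow> real"
    and \<omega> :: "nat \<Rightarrow> complex" and p q r :: nat
  assumes "d \<ge> 1"
    and "invertible (A d)"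
    and "\<exists>j<d. beta j \<noteq> 0"
    and "inj_on \<omega> {1..M}"
    and "\<omega> ` {1..M} = {w. is_eigenvalue (complexify (symbol_matrix d A beta)) w}"
    and "p \<in> {1..M}" "q \<in> {1..M}" "r \<in> {1..M}"
    and "resonance d beta \<omega> p q r"
  shows "(p \<in> IO_set M \<omega> \<longrightarrow> q \<in> IO_set M \<omega> \<and> r \<in> IO_set M \<omega>)
    \<and> (p \<in> P_set M \<omega> \<union> N_set M \<omega> \<longrightarrow>
         q \<in> P_set M \<omega> \<union> N_set M \<omega> \<or> r \<in> P_set M \<omega> \<union> N_set M \<omega>)"
proof -
  have IO_iff: "m \<in> IO_set M \<omega> \<longleftrightarrow> m \<in> {1..M} \<and> Im (\<omega> m) = 0" for m
    by (simp add: IO_set_def complex_is_Real_iff)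
  have PN_iff: "m \<in> P_set M \<omega> \<union> N_set M \<omega> \<longleftrightarrow> m \<in> {1..M} \<and> Im (\<omega> m) \<noteq> 0" for m
    by (auto simp: P_set_def N_set_def)
  show ?thesis
    using resonance_Im_zero[OF assms(9)] resonance_Im_nonzero[OF assms(9)] assms(7,8)
    unfolding IO_iff PN_iff by blast
qed

end
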